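(* Let $H=(V,\mathcal E)$ be a finite hypergraph and let $\mathcal L=\{L_v\}_{v\in V}$ be a family of sets of positive integers such that $|L_v|\ge\min(\deg_H(v)+1,\,s(H))$ for every $v\in V$. Then $H$ admits a unique-maximum coloring from $\mathcal L$.
   Context: A hypergraph $H=(V,\mathcal E)$ has finite vertex set and a set $\mathcal E$ of nonempty subsets of $V$. $\deg_H(v)$ is the number of hyperedges containing $v$. $s(H)$ is the minimum positive integer $s$ with $|\mathcal E|\le s(s-1)/2$. A coloring $C\colon V\to\mathbb Z_{>0}$ is unique-maximum if in every hyperedge the maximum color is attained by exactly one vertex; $H$ admits such a coloring from $\mathcal L$ if moreover $C(v)\in L_v$ for all $v$. *)

theory Defs
  imports Main
begin

definition hypergraph :: "'a set \<Rightarrow> 'a set set \<Rightarrow> bool" where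
  "hypergraph V E \<longleftrightarrow> finite V \<and> (\<forall>e\<in>E. e \<noteq> {} \<and> e \<subseteq> V)"

definition hdeg :: "'a set set \<Rightarrow> 'a \<Rightarrow> nat" where
  "hdeg E v = card {e\<in>E. v \<in> e}"

definition s_param :: "'a set set \<Rightarrow> nat" where
  "s_param E = (LEAST s::nat. 0 < s \<and> 2 * card E \<le> s * (s - 1))"

definition unique_max_coloring :: "'a set set \<Rightarrow> ('a \<Rightarrow> nat) \<Rightarrow> bool" where
  "unique_max_coloring E C \<longleftrightarrow>
     (\<forall>e\<in>E. \<exists>v\<in>e. \<forall>w\<in>e. w \<noteq> v \<longrightarrow> C w < C v)"

end

theory Submission
  imports Defs
begin

(* Proof by induction on the number of vertices: delete a vertex v, colour the
   rest by induction, and give v a colour from its list.  Two reductions are used.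
   (1) If L_v is infinite or |L_v| > deg(v), pass to the trace hypergraph (v
       removed from every edge, the edge {v} dropped).  It has no more edges and
       no larger degrees, so the list condition survives.  The at most deg(v)
       maxima of the traced edges through v are forbidden; any other colour of
       L_v extends the colouring.
   (2) Otherwise all lists are finite; let v own the largest colour c of all
       lists.  If |L_v| <= deg(v), the list condition forces deg(v) >= s(H).
       Delete all edges through v and remove c from the lists of the neighbours
       of v: at least s(H) edges disappear, so s drops by one, and each
       neighbour loses one edge and at most one colour, so the list condition
       survives.  Giving v the colour c makes it the unique maximum of its edges. *)

definition list_condition :: "'a set \<Rightarrow> 'a set set \<Rightarrow> ('a \<Rightarrow> nat set) \<Rightarrow> bool" where
  "list_condition V E L \<longleftrightarrow>
     (\<forall>v\<in>V. infinite (L v) \<or> min (hdeg E v + 1) (s_param E) \<le> card (L v))"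

definition vertex_trace :: "'a set set \<Rightarrow> 'a \<Rightarrow> 'a set set" where
  "vertex_trace E v = (\<lambda>e. e - {v}) ` {e\<in>E. e \<noteq> {v}}"

definition edges_avoiding :: "'a set set \<Rightarrow> 'a \<Rightarrow> 'a set set" where
  "edges_avoiding E v = {e\<in>E. v \<notin> e}"

lemma hypergraph_finite_edges: "hypergraph V E \<Longrightarrow> finite E"
  unfolding hypergraph_def by (meson PowI finite_Pow_iff finite_subset subsetI)

subsection \<open>The parameter s(H)\<close>

text \<open>s(H) is a well-defined minimum: 2|E| + 1 is always a candidate.\<close>
lemma s_param_spec: "0 < s_param E \<and> 2 * card E \<le> s_param E * (s_param E - 1)"
proof -
  have "0 < 2 * card E + 1 \<and> 2 * card E \<le> (2 * card E + 1) * (2 * card E + 1 - 1)" by simp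
  then show ?thesis unfolding s_param_def by (rule LeastI)
qed

lemma s_param_least: "0 < s \<Longrightarrow> 2 * card E \<le> s * (s - 1) \<Longrightarrow> s_param E \<le> s"
  unfolding s_param_def by (rule Least_le) simp

lemma s_param_mono: assumes "card E' \<le> card E" shows "s_param E' \<le> s_param E"
proof (rule s_param_least)
  show "0 < s_param E" using s_param_spec by blast
  have "2 * card E' \<le> 2 * card E" using assms by simp
  also have "\<dots> \<le> s_param E * (s_param E - 1)" using s_param_spec by blast
  finally show "2 * card E' \<le> s_param E * (s_param E - 1)" .
qed

text \<open>Deleting at least s(H) edges strictly decreases s: with s = t + 2 we have
  |E| \<le> (t+2)(t+1)/2, hence |E'| \<le> |E| - (t+2) \<le> (t+1)t/2.\<close>
lemma s_param_decrease:
  assumes del: "card E' + s_param E \<le> card E"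
  shows "s_param E' < s_param E"
proof -
  define s where "s = s_param E"
  have s_pos: "0 < s" and bound: "2 * card E \<le> s * (s - 1)"
    using s_param_spec unfolding s_def by auto
  have "s \<noteq> 1" using bound del unfolding s_def by auto
  then obtain t where t: "s = t + 2" using s_pos by (metis add_2_eq_Suc' less_natE neq0_conv One_nat_def)
  have "2 * card E \<le> (t + 1) * t + 2 * t + 2"
    using bound unfolding t by (simp add: algebra_simps)
  then have "2 * card E' \<le> (t + 1) * t" using del unfolding s_def[symmetric] t by linarith
  then have "s_param E' \<le> t + 1" by (intro s_param_least) (simp_all add: mult.commute)
  then show ?thesis unfolding s_def[symmetric] t by simp
qed

lemma hypergraph_vertex_trace:
  "hypergraph V E \<Longrightarrow> hypergraph (V - {v}) (vertex_trace E v)"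
  unfolding hypergraph_def vertex_trace_def by auto

lemma card_vertex_trace: assumes "finite E" shows "card (vertex_trace E v) \<le> card E"
proof -
  have "card (vertex_trace E v) \<le> card {e\<in>E. e \<noteq> {v}}"
    unfolding vertex_trace_def by (rule card_image_le) (use assms in auto)
  also have "\<dots> \<le> card E" by (rule card_mono) (use assms in auto)
  finally show ?thesis .
qed

lemma hdeg_vertex_trace:
  assumes "finite E" and "u \<noteq> v" shows "hdeg (vertex_trace E v) u \<le> hdeg E u"
proof -
  have "{e\<in>vertex_trace E v. u \<in> e} = (\<lambda>e. e - {v}) ` {e\<in>E. e \<noteq> {v} \<and> u \<in> e}"
    unfolding vertex_trace_def using assms(2) by auto
  then have "hdeg (vertex_trace E v) u \<le> card {e\<in>E. e \<noteq> {v} \<and> u \<in> e}"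
    unfolding hdeg_def by (simp add: card_image_le assms(1))
  also have "\<dots> \<le> hdeg E u" unfolding hdeg_def by (rule card_mono) (use assms in auto)
  finally show ?thesis .
qed

lemma hypergraph_edges_avoiding:
  "hypergraph V E \<Longrightarrow> hypergraph (V - {v}) (edges_avoiding E v)"
  unfolding hypergraph_def edges_avoiding_def by auto

lemma card_edges_avoiding:
  assumes "finite E" shows "card (edges_avoiding E v) + hdeg E v = card E"
proof -
  have "edges_avoiding E v = E - {e\<in>E. v \<in> e}" unfolding edges_avoiding_def by auto
  moreover have "hdeg E v \<le> card E" unfolding hdeg_def by (rule card_mono) (use assms in auto)
  ultimately show ?thesis unfolding hdeg_def using assms by (simp add: card_Diff_subset)
qed

lemma hdeg_edges_avoiding_neighbour:
  assumes "finite E" "e0 \<in> E" "v \<in> e0" "u \<in> e0"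
  shows "hdeg (edges_avoiding E v) u + 1 \<le> hdeg E u"
proof -
  have "{e\<in>edges_avoiding E v. u \<in> e} \<subseteq> {e\<in>E. u \<in> e} - {e0}"
    unfolding edges_avoiding_def using assms by auto
  then have "hdeg (edges_avoiding E v) u \<le> card ({e\<in>E. u \<in> e} - {e0})"
    unfolding hdeg_def by (rule card_mono[rotated]) (use assms in auto)
  moreover have "0 < hdeg E u" unfolding hdeg_def using assms by (subst card_gt_0_iff) auto
  ultimately show ?thesis unfolding hdeg_def using assms by (simp add: card_Diff_singleton)
qed

lemma hdeg_edges_avoiding: "finite E \<Longrightarrow> hdeg (edges_avoiding E v) u \<le> hdeg E u"
  unfolding hdeg_def edges_avoiding_def by (rule card_mono) auto

subsection \<open>Transfer of the list condition\<close>

lemma list_bound_transfer: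
  assumes "hdeg E' u + d \<le> hdeg E u" "s_param E' + d \<le> s_param E"
    and "min (hdeg E u + 1) (s_param E) \<le> card A" "card A \<le> card B + d"
  shows "min (hdeg E' u + 1) (s_param E') \<le> card B"
  using assms by (simp add: min_def split: if_splits)

lemma list_condition_vertex_trace:
  assumes "hypergraph V E" "list_condition V E L"
  shows "list_condition (V - {v}) (vertex_trace E v) L"
  unfolding list_condition_def
proof
  fix u assume u: "u \<in> V - {v}"
  have fin: "finite E" using hypergraph_finite_edges[OF assms(1)] .
  have "min (hdeg (vertex_trace E v) u + 1) (s_param (vertex_trace E v)) \<le> card (L u)"
    if "min (hdeg E u + 1) (s_param E) \<le> card (L u)"
    by (rule list_bound_transfer[where d = 0, OF _ _ that])
      (use hdeg_vertex_trace[OF fin] s_param_mono[OF card_vertex_trace[OF fin]] u in auto)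
  then show "infinite (L u) \<or> min (hdeg (vertex_trace E v) u + 1) (s_param (vertex_trace E v)) \<le> card (L u)"
    using assms(2) u unfolding list_condition_def by auto
qed

lemma list_condition_edges_avoiding:
  fixes c :: nat
  assumes hg: "hypergraph V E" and cond: "list_condition V E L"
    and fin_lists: "\<forall>u\<in>V. finite (L u)" and deg: "s_param E \<le> hdeg E v"
  defines "L' \<equiv> \<lambda>u. if \<exists>e\<in>E. v \<in> e \<and> u \<in> e then L u - {c} else L u"
  shows "list_condition (V - {v}) (edges_avoiding E v) L'"
  unfolding list_condition_def
proof
  fix u assume u: "u \<in> V - {v}"
  have finE: "finite E" using hypergraph_finite_edges[OF hg] .
  have s_drop: "s_param (edges_avoiding E v) + 1 \<le> s_param E"
    using s_param_decrease card_edges_avoiding[OF finE, of v] deg by (metis Suc_eq_plus1 Suc_leI add_left_mono)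
  have bound: "min (hdeg E u + 1) (s_param E) \<le> card (L u)"
    using cond fin_lists u unfolding list_condition_def by auto
  have "min (hdeg (edges_avoiding E v) u + 1) (s_param (edges_avoiding E v)) \<le> card (L' u)"
  proof (cases "\<exists>e\<in>E. v \<in> e \<and> u \<in> e")
    case True
    then obtain e0 where "e0 \<in> E" "v \<in> e0" "u \<in> e0" by blast
    moreover have "card (L u) \<le> card (L u - {c}) + 1"
      using fin_lists u by (cases "c \<in> L u") (auto simp: card_Diff_singleton card_gt_0_iff)
    ultimately show ?thesis unfolding L'_def using True
      by (intro list_bound_transfer[OF hdeg_edges_avoiding_neighbour[OF finE] s_drop bound]) auto
  next
    case False
    then have "L' u = L u" unfolding L'_def by (rule if_not_P)
    then show ?thesis using s_drop
      by (intro list_bound_transfer[where d = 0, OF _ _ bound]) (simp_all add: hdeg_edges_avoiding[OF finE])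
  qed
  then show "infinite (L' u) \<or> min (hdeg (edges_avoiding E v) u + 1) (s_param (edges_avoiding E v)) \<le> card (L' u)" ..
qed

subsection \<open>Extending a colouring to the vertex v\<close>

lemma unique_max_update_avoiding:
  assumes "e \<in> edges_avoiding E v" "unique_max_coloring (edges_avoiding E v) C"
  shows "\<exists>w\<in>e. \<forall>w'\<in>e. w' \<noteq> w \<longrightarrow> (C(v := x)) w' < (C(v := x)) w"
proof -
  obtain w where "w \<in> e" "\<forall>w'\<in>e. w' \<noteq> w \<longrightarrow> C w' < C w"
    using assms unfolding unique_max_coloring_def by blast
  moreover have "v \<notin> e" using assms(1) unfolding edges_avoiding_def by blast
  ultimately show ?thesis by (metis fun_upd_other)
qed

lemma edges_avoiding_subset_vertex_trace: "edges_avoiding E v \<subseteq> vertex_trace E v"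
  unfolding edges_avoiding_def vertex_trace_def by force

lemma unique_max_coloring_subset:
  "E' \<subseteq> E \<Longrightarrow> unique_max_coloring E C \<Longrightarrow> unique_max_coloring E' C"
  unfolding unique_max_coloring_def by blast

text \<open>Extension for reduction (1): on a traced edge e - {v} the colouring has a unique
  maximum; if the colour of v differs from that maximum, either v or the old maximiser
  is the unique maximum of e.\<close>
lemma unique_max_extend_free_colour:
  assumes hg: "hypergraph V E" and um: "unique_max_coloring (vertex_trace E v) C"
    and free: "x \<notin> (\<lambda>e. Max (C ` (e - {v}))) ` {e\<in>E. v \<in> e}"
  shows "unique_max_coloring E (C(v := x))"
  unfolding unique_max_coloring_def
proof
  fix e assume e: "e \<in> E"
  have um_avoid: "unique_max_coloring (edges_avoiding E v) C"
    using unique_max_coloring_subset[OF edges_avoiding_subset_vertex_trace um] .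
  show "\<exists>w\<in>e. \<forall>w'\<in>e. w' \<noteq> w \<longrightarrow> (C(v := x)) w' < (C(v := x)) w"
  proof (cases "v \<in> e \<and> e \<noteq> {v}")
    case False
    then consider "e = {v}" | "e \<in> edges_avoiding E v" using e unfolding edges_avoiding_def by blast
    then show ?thesis
    proof cases
      case 1
      then show ?thesis by (intro bexI[of _ v]) auto
    qed (rule unique_max_update_avoiding[OF _ um_avoid])
  next
    case True
    then have "e - {v} \<in> vertex_trace E v" using e unfolding vertex_trace_def by auto
    then obtain w where w: "w \<in> e - {v}" "\<forall>w'\<in>e - {v}. w' \<noteq> w \<longrightarrow> C w' < C w"
      using um unfolding unique_max_coloring_def by blast
    have "finite (e - {v})" using hg e unfolding hypergraph_def by (meson finite_Diff finite_subset)
    then have "Max (C ` (e - {v})) = C w" using w by (intro Max_eqI) (auto intro: less_imp_le)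
    moreover have "Max (C ` (e - {v})) \<in> (\<lambda>e. Max (C ` (e - {v}))) ` {e\<in>E. v \<in> e}"
      using e True by blast
    ultimately have "x \<noteq> C w" using free by metis
    then consider "x < C w" | "C w < x" by linarith
    then show ?thesis
    proof cases
      case 1
      then show ?thesis using w by (intro bexI[of _ w]) auto
    next
      case 2
      have "C w' < x" if "w' \<in> e - {v}" for w'
        using w 2 that by (cases "w' = w") auto
      then show ?thesis using True by (intro bexI[of _ v]) auto
    qed
  qed
qed

lemma unique_max_extend_top_colour:
  assumes um: "unique_max_coloring (edges_avoiding E v) C"
    and top: "\<And>e w. e \<in> E \<Longrightarrow> v \<in> e \<Longrightarrow> w \<in> e \<Longrightarrow> w \<noteq> v \<Longrightarrow> C w < c"
  shows "unique_max_coloring E (C(v := c))"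
  unfolding unique_max_coloring_def
proof
  fix e assume e: "e \<in> E"
  show "\<exists>w\<in>e. \<forall>w'\<in>e. w' \<noteq> w \<longrightarrow> (C(v := c)) w' < (C(v := c)) w"
  proof (cases "v \<in> e")
    case True
    then show ?thesis using top[OF e] by (intro bexI[of _ v]) auto
  next
    case False
    then show ?thesis using unique_max_update_avoiding[OF _ um] e
      unfolding edges_avoiding_def by blast
  qed
qed

text \<open>Under the list condition every list is nonempty, since s(H) \<ge> 1.\<close>
lemma list_condition_nonempty:
  assumes "list_condition V E L" "v \<in> V" shows "L v \<noteq> {}"
proof -
  have "0 < min (hdeg E v + 1) (s_param E)" using s_param_spec[of E] by simp
  moreover have "infinite (L v) \<or> min (hdeg E v + 1) (s_param E) \<le> card (L v)"
    using assms unfolding list_condition_def by blast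
  ultimately show ?thesis by auto
qed

lemma top_colour_exists:
  assumes "finite V" "V \<noteq> {}" "\<forall>u\<in>V. finite (L u) \<and> L u \<noteq> {}"
  shows "\<exists>v\<in>V. \<exists>c\<in>L v. \<forall>u\<in>V. \<forall>y\<in>L u. y \<le> (c::nat)"
proof -
  define U where "U = \<Union> (L ` V)"
  have "finite U" "U \<noteq> {}" unfolding U_def using assms by auto
  then have "Max U \<in> U" "\<forall>y\<in>U. y \<le> Max U" by auto
  then show ?thesis unfolding U_def by blast
qed

lemma colour_avoiding:
  assumes "finite F" "infinite A \<or> card F + 1 \<le> card A"
  shows "\<exists>x\<in>A. x \<notin> F"
proof -
  have "\<not> A \<subseteq> F"
  proof
    assume sub: "A \<subseteq> F"
    then have "finite A" using assms(1) by (rule finite_subset)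
    moreover have "card A \<le> card F" using assms(1) sub by (rule card_mono)
    ultimately show False using assms(2) by simp
  qed
  then show ?thesis by blast
qed

definition list_colourable :: "'a set \<Rightarrow> 'a set set \<Rightarrow> ('a \<Rightarrow> nat set) \<Rightarrow> bool" where
  "list_colourable V E L \<longleftrightarrow> (\<exists>C. (\<forall>u\<in>V. C u \<in> L u) \<and> unique_max_coloring E C)"

lemma reduction_free_colour:
  assumes hg: "hypergraph V E" and v: "v \<in> V"
    and big: "infinite (L v) \<or> hdeg E v + 1 \<le> card (L v)"
    and reduced: "list_colourable (V - {v}) (vertex_trace E v) L"
  shows "list_colourable V E L"
proof -
  obtain C where CL: "\<forall>u\<in>V - {v}. C u \<in> L u" and um: "unique_max_coloring (vertex_trace E v) C"
    using reduced unfolding list_colourable_def by blast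
  define F where "F = (\<lambda>e. Max (C ` (e - {v}))) ` {e\<in>E. v \<in> e}"
  have "finite F" "card F \<le> hdeg E v"
    unfolding F_def hdeg_def using hypergraph_finite_edges[OF hg] by (auto intro: card_image_le)
  then obtain x where "x \<in> L v" "x \<notin> F" using colour_avoiding[of F "L v"] big by fastforce
  then show ?thesis using CL unique_max_extend_free_colour[OF hg um] v
    unfolding F_def list_colourable_def by (intro exI[of _ "C(v := x)"]) auto
qed

lemma reduction_top_colour:
  assumes hg: "hypergraph V E" and v: "v \<in> V" "c \<in> L v"
    and top: "\<forall>u\<in>V. \<forall>y\<in>L u. y \<le> c"
  defines "L' \<equiv> \<lambda>u. if \<exists>e\<in>E. v \<in> e \<and> u \<in> e then L u - {c} else L u"
  assumes reduced: "list_colourable (V - {v}) (edges_avoiding E v) L'"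
  shows "list_colourable V E L"
proof -
  obtain C where CL: "\<forall>u\<in>V - {v}. C u \<in> L' u" and um: "unique_max_coloring (edges_avoiding E v) C"
    using reduced unfolding list_colourable_def by blast
  have "C w < c" if "e \<in> E" "v \<in> e" "w \<in> e" "w \<noteq> v" for e w
  proof -
    have "w \<in> V" using hg that unfolding hypergraph_def by blast
    then have "C w \<in> L' w" using CL that by blast
    moreover have "L' w = L w - {c}" using that unfolding L'_def by auto
    ultimately have "C w \<in> L w - {c}" by simp
    then show ?thesis using top \<open>w \<in> V\<close> by fastforce
  qed
  then have "unique_max_coloring E (C(v := c))" by (rule unique_max_extend_top_colour[OF um])
  moreover have "\<forall>u\<in>V. (C(v := c)) u \<in> L u" using CL v unfolding L'_def by (auto split: if_splits)
  ultimately show ?thesis unfolding list_colourable_def by blast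
qed

text \<open>Induction on |V|: an infinite list or a list longer than the degree allows
  reduction (1); otherwise the owner of the largest colour has degree at least s(H)
  and reduction (2) applies.\<close>
lemma list_condition_imp_colourable:
  "hypergraph V E \<Longrightarrow> list_condition V E L \<Longrightarrow> list_colourable V E L"
proof (induction "card V" arbitrary: V E L rule: less_induct)
  case less
  note hg = less.prems(1) and cond = less.prems(2)
  have finV: "finite V" using hg unfolding hypergraph_def by simp
  have IH: "list_colourable (V - {v}) E' L'"
    if "v \<in> V" "hypergraph (V - {v}) E'" "list_condition (V - {v}) E' L'" for v E' L'
    using less.hyps[OF card_Diff1_less[OF finV that(1)] that(2,3)] .
  have free_step: ?case if "v \<in> V" "infinite (L v) \<or> hdeg E v + 1 \<le> card (L v)" for v
    using reduction_free_colour[of V E v L, OF hg that]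
      IH[OF that(1) hypergraph_vertex_trace[OF hg] list_condition_vertex_trace[OF hg cond]] by blast
  show ?case
  proof (cases "V = {}")
    case True
    then have "E = {}" using hg unfolding hypergraph_def by auto
    then show ?thesis using True unfolding list_colourable_def unique_max_coloring_def by auto
  next
    case nonempty: False
    show ?thesis
    proof (cases "\<forall>u\<in>V. finite (L u)")
      case False
      then show ?thesis using free_step by blast
    next
      case fin_lists: True
      obtain v c where v: "v \<in> V" "c \<in> L v" and top: "\<forall>u\<in>V. \<forall>y\<in>L u. y \<le> c"
        using top_colour_exists[OF finV nonempty] fin_lists list_condition_nonempty[OF cond] by metis
      show ?thesis
      proof (cases "hdeg E v + 1 \<le> card (L v)")
        case True
        then show ?thesis using free_step[OF v(1)] by blast
      next
        case False
        then have "s_param E \<le> hdeg E v"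
          using cond v fin_lists unfolding list_condition_def by (auto simp: min_def split: if_splits)
        then show ?thesis
          using reduction_top_colour[of V E v c L, OF hg v top]
            IH[OF v(1) hypergraph_edges_avoiding[OF hg] list_condition_edges_avoiding[OF hg cond fin_lists]]
          by blast
      qed
    qed
  qed
qed

theorem theorem5p3:
  fixes V :: "'a set" and E :: "'a set set" and L :: "'a \<Rightarrow> nat set"
  assumes "hypergraph V E"
    and "\<forall>v\<in>V. L v \<subseteq> {n. 0 < n}"
    and "\<forall>v\<in>V. infinite (L v) \<or> min (hdeg E v + 1) (s_param E) \<le> card (L v)"
  shows "\<exists>C :: 'a \<Rightarrow> nat. (\<forall>v\<in>V. C v \<in> L v) \<and> unique_max_coloring E C"
  using list_condition_imp_colourable[OF assms(1)] assms(3)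
  unfolding list_condition_def list_colourable_def by blast

end
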